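(* Let $k\geqslant 2$ be an integer, and in $B_5$ let $\delta_3=\sigma_2\sigma_1$, $\tilde\delta_3=\sigma_1\sigma_2$, $\Delta_3=\sigma_2\sigma_1\sigma_2$ and \[\beta'_k=(\sigma_1\sigma_3)^{2k-2}(\sigma_3\sigma_4\Delta_3)(\Delta_3\sigma_4)\big[(\delta_3\sigma_4)(\tilde\delta_3\sigma_4)\big]^{k-1}(\delta_3\sigma_4\sigma_3\sigma_4).\] Then $\beta'_k$ is not periodic, i.e. there are no nonzero integers $m,l$ with $(\beta'_k)^m=\Delta^l$.
   Context: $B_5$ is the 5-strand braid group with standard generators $\sigma_1,\dots,\sigma_4$, and $\Delta=(\sigma_1\sigma_2\sigma_3\sigma_4)(\sigma_1\sigma_2\sigma_3)(\sigma_1\sigma_2)\sigma_1$. *)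

theory Defs
  imports Main
begin

text \<open>Braid words: a letter i with 1 <= |i| < n stands for sigma_i if i > 0 and
  for sigma_|i| inverse if i < 0.  The braid group B_n is the set of words modulo
  the congruence braid_eq n generated by free cancellation and the Artin relations.\<close>

inductive braid_eq :: "nat \<Rightarrow> int list \<Rightarrow> int list \<Rightarrow> bool" for n :: nat where
  refl: "braid_eq n w w"
| sym: "braid_eq n u v \<Longrightarrow> braid_eq n v u"
| trans: "braid_eq n u v \<Longrightarrow> braid_eq n v w \<Longrightarrow> braid_eq n u w"
| cong: "braid_eq n u v \<Longrightarrow> braid_eq n (a @ u @ b) (a @ v @ b)"
| cancel: "1 \<le> \<bar>i\<bar> \<Longrightarrow> \<bar>i\<bar> < int n \<Longrightarrow> braid_eq n [i, -i] []"
| comm: "1 \<le> i \<Longrightarrow> 1 \<le> j \<Longrightarrow> i < int n \<Longrightarrow> j < int n \<Longrightarrow> \<bar>i - j\<bar> \<ge> 2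
          \<Longrightarrow> braid_eq n [i, j] [j, i]"
| braid: "1 \<le> i \<Longrightarrow> i + 1 < int n \<Longrightarrow> braid_eq n [i, i + 1, i] [i + 1, i, i + 1]"

definition word_inv :: "int list \<Rightarrow> int list" where
  "word_inv w = rev (map uminus w)"

definition word_pow :: "int list \<Rightarrow> int \<Rightarrow> int list" where
  "word_pow w m = (if m \<ge> 0 then concat (replicate (nat m) w)
                   else concat (replicate (nat (- m)) (word_inv w)))"

definition Delta5 :: "int list" where
  "Delta5 = [1,2,3,4] @ [1,2,3] @ [1,2] @ [1]"

definition delta3 :: "int list" where "delta3 = [2,1]"
definition tdelta3 :: "int list" where "tdelta3 = [1,2]"
definition Delta3 :: "int list" where "Delta3 = [2,1,2]"

definition beta' :: "nat \<Rightarrow> int list" where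
  "beta' k = word_pow [1,3] (2 * int k - 2)
             @ ([3,4] @ Delta3)
             @ (Delta3 @ [4])
             @ word_pow ((delta3 @ [4]) @ (tdelta3 @ [4])) (int k - 1)
             @ (delta3 @ [4,3,4])"

definition periodic5 :: "int list \<Rightarrow> bool" where
  "periodic5 w \<longleftrightarrow> (\<exists>m l :: int. m \<noteq> 0 \<and> l \<noteq> 0 \<and>
      braid_eq 5 (word_pow w m) (word_pow Delta5 l))"

end

theory Submission
  imports Defs
begin

text \<open>Two invariants of words in the braid group survive the braid relations: the exponent
  sum, and, for every pair of strands, the signed number of crossings between them (the
  linking number, once the braid is pure).  The exponent sum of \<open>\<beta>'\<^sub>k\<close> is \<open>10k + 4\<close> and that
  of \<open>\<Delta>\<close> is \<open>10\<close>, so \<open>(\<beta>'\<^sub>k)\<^sup>m = \<Delta>\<^sup>l\<close> forces \<open>5 | m\<close>.  The permutation of \<open>\<beta>'\<^sub>k\<close> is a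
  5-cycle, so \<open>(\<beta>'\<^sub>k)\<^sup>5\<close> is pure, with linking numbers \<open>8k + 2\<close> between strands 1, 2 and
  \<open>2k + 2\<close> between strands 1, 3; in \<open>\<Delta>\<^sup>l\<close> every pair of strands crosses exactly \<open>l\<close> times.
  Comparing the two pairs gives \<open>m = 0\<close>.\<close>

definition swap_at :: "nat \<Rightarrow> (nat \<Rightarrow> nat) \<Rightarrow> nat \<Rightarrow> nat" where
  "swap_at a p = p(a := p (Suc a), Suc a := p a)"

definition pair_weight :: "nat \<Rightarrow> nat \<Rightarrow> int \<Rightarrow> nat \<Rightarrow> nat \<Rightarrow> int" where
  "pair_weight u v s x y = (if (x = u \<and> y = v) \<or> (x = v \<and> y = u) then s else 0)"

text \<open>A labelling \<open>p\<close> maps each position to the strand currently there; the letter \<open>i\<close>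
  makes the strands at positions \<open>|i|\<close> and \<open>|i| + 1\<close> cross with sign \<open>sgn i\<close>.\<close>

definition crossing :: "(nat \<Rightarrow> nat) \<Rightarrow> int \<Rightarrow> nat \<Rightarrow> nat \<Rightarrow> int" where
  "crossing p i = pair_weight (p (nat \<bar>i\<bar>)) (p (Suc (nat \<bar>i\<bar>))) (sgn i)"

fun strands :: "(nat \<Rightarrow> nat) \<Rightarrow> int list \<Rightarrow> nat \<Rightarrow> nat" where
  "strands p [] = p"
| "strands p (i # w) = strands (swap_at (nat \<bar>i\<bar>) p) w"

fun linking :: "(nat \<Rightarrow> nat) \<Rightarrow> int list \<Rightarrow> nat \<Rightarrow> nat \<Rightarrow> int" where
  "linking p [] x y = 0"
| "linking p (i # w) x y = crossing p i x y + linking (swap_at (nat \<bar>i\<bar>) p) w x y"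

definition exp_sum :: "int list \<Rightarrow> int" where
  "exp_sum w = sum_list (map sgn w)"

lemma strands_append: "strands p (u @ v) = strands (strands p u) v"
  by (induction u arbitrary: p) auto

lemma linking_append: "linking p (u @ v) x y = linking p u x y + linking (strands p u) v x y"
  by (induction u arbitrary: p) auto

lemma swap_at_commute:
  "a \<noteq> b \<Longrightarrow> a \<noteq> Suc b \<Longrightarrow> Suc a \<noteq> b \<Longrightarrow> swap_at a (swap_at b p) = swap_at b (swap_at a p)"
  by (auto simp: swap_at_def fun_eq_iff)

lemma pair_weight_commute: "pair_weight u v = pair_weight v u"
  by (auto simp: pair_weight_def fun_eq_iff)

lemma braid_eq_strands_linking:
  "braid_eq n u v \<Longrightarrow> strands p u = strands p v \<and> linking p u x y = linking p v x y"
proof (induction arbitrary: p rule: braid_eq.induct)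
  case (cong u v a b)
  then show ?case by (simp add: strands_append linking_append)
next
  case (cancel i)
  then show ?case by (auto simp: swap_at_def crossing_def pair_weight_def fun_eq_iff)
next
  case (comm i j)
  define a b where "a = nat \<bar>i\<bar>" and "b = nat \<bar>j\<bar>"
  have apart: "a \<noteq> b" "a \<noteq> Suc b" "Suc a \<noteq> b"
    using comm.hyps unfolding a_def b_def by auto
  have "strands p [i, j] = strands p [j, i]"
    using swap_at_commute[OF apart] by (simp add: a_def[symmetric] b_def[symmetric])
  moreover have "linking p [i, j] x y = linking p [j, i] x y"
    using apart by (simp add: crossing_def a_def[symmetric] b_def[symmetric] swap_at_def)
  ultimately show ?case ..
next
  case (braid i)
  define a where "a = nat \<bar>i\<bar>"
  have shift: "nat \<bar>i + 1\<bar> = Suc a" "sgn i = 1" "sgn (i + 1) = 1"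
    using braid.hyps unfolding a_def by auto
  have "strands p [i, i + 1, i] = strands p [i + 1, i, i + 1]"
    by (simp add: shift a_def[symmetric] swap_at_def fun_eq_iff)
  moreover have "linking p [i, i + 1, i] x y = linking p [i + 1, i, i + 1] x y"
    by (simp add: shift a_def[symmetric] swap_at_def crossing_def pair_weight_commute)
  ultimately show ?case ..
qed auto

lemma braid_eq_exp_sum: "braid_eq n u v \<Longrightarrow> exp_sum u = exp_sum v"
  by (induction rule: braid_eq.induct) (auto simp: exp_sum_def)

lemma strands_comp: "strands (p \<circ> q) w = p \<circ> strands q w"
proof (induction w arbitrary: q)
  case (Cons i w)
  have "swap_at (nat \<bar>i\<bar>) (p \<circ> q) = p \<circ> swap_at (nat \<bar>i\<bar>) q"
    by (auto simp: swap_at_def fun_eq_iff)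
  then show ?case by (simp only: strands.simps Cons.IH)
qed simp

lemma strands_eq_comp: "strands p w = p \<circ> strands id w"
  using strands_comp[of p id w] by simp

definition pure_word :: "int list \<Rightarrow> bool" where
  "pure_word w \<longleftrightarrow> strands id w = id"

lemma strands_pure: "pure_word w \<Longrightarrow> strands p w = p"
  by (simp add: pure_word_def strands_eq_comp[of p w])

lemma strands_replicate_pure: "pure_word w \<Longrightarrow> strands p (concat (replicate j w)) = p"
  by (induction j) (auto simp: strands_append strands_pure)

lemma linking_replicate_pure:
  "pure_word w \<Longrightarrow> linking p (concat (replicate j w)) x y = int j * linking p w x y"
  by (induction j) (auto simp: linking_append strands_pure algebra_simps)

lemma concat_replicate_snoc: "concat (replicate j w) @ w = w @ concat (replicate j w)"
  by (induction j) auto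

lemma concat_replicate_mult:
  "concat (replicate (a * b) w) = concat (replicate a (concat (replicate b w)))"
  by (induction a) (auto simp: replicate_add)

lemma word_inv_append: "word_inv (u @ v) = word_inv v @ word_inv u"
  by (simp add: word_inv_def)

lemma word_inv_word_inv: "word_inv (word_inv w) = w"
  by (simp add: word_inv_def rev_map)

lemma word_inv_replicate: "word_inv (concat (replicate j w)) = concat (replicate j (word_inv w))"
  by (induction j) (auto simp: word_inv_append word_inv_def concat_replicate_snoc)

lemma strands_linking_word_inv:
  "strands (strands p w) (word_inv w) = p \<and> linking p w x y + linking (strands p w) (word_inv w) x y = 0"
proof (induction w arbitrary: p)
  case (Cons i w)
  have "word_inv (i # w) = word_inv w @ [-i]" by (simp add: word_inv_def)
  moreover have "swap_at (nat \<bar>i\<bar>) (swap_at (nat \<bar>i\<bar>) p) = p"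
    by (auto simp: swap_at_def fun_eq_iff)
  moreover have "crossing p i x y + crossing (swap_at (nat \<bar>i\<bar>) p) (-i) x y = 0"
    by (auto simp: crossing_def pair_weight_def swap_at_def sgn_if)
  ultimately show ?case
    using Cons[of "swap_at (nat \<bar>i\<bar>) p"] by (simp add: strands_append linking_append)
qed (simp add: word_inv_def)

text \<open>The invariants of \<open>w\<close> are recovered from those of \<open>w\<inverse>\<close>: \<open>strands id w\<close> is the
  inverse permutation of \<open>strands id w\<inverse>\<close>, and then \<open>w\<inverse>\<close> read from that labelling
  undoes the crossings of \<open>w\<close>.\<close>

lemma linking_eq_if_word_inv_equiv:
  assumes "braid_eq n (word_inv U) (word_inv V)"
  shows "linking id U x y = linking id V x y"
proof -
  have inv_eq: "strands p (word_inv U) = strands p (word_inv V)"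
    "linking p (word_inv U) x y = linking p (word_inv V) x y" for p
    using braid_eq_strands_linking[OF assms] by auto
  define f g where "f = strands id U" and "g = strands id (word_inv V)"
  have U: "strands f (word_inv U) = id" "linking id U x y + linking f (word_inv U) x y = 0"
    using strands_linking_word_inv[of id U x y] unfolding f_def by auto
  have V: "strands (strands id V) (word_inv V) = id"
    "linking id V x y + linking (strands id V) (word_inv V) x y = 0"
    using strands_linking_word_inv[of id V x y] by auto
  have "f \<circ> g = id"
    using U(1) inv_eq[of f] strands_eq_comp[of f "word_inv V"] unfolding g_def by simp
  moreover have "g \<circ> strands id V = id"
    using strands_linking_word_inv[of id "word_inv V"] strands_eq_comp[of g V]
    unfolding g_def word_inv_word_inv by simp
  ultimately have "f = strands id V" by (metis comp_assoc comp_id id_comp)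
  then show ?thesis using U V inv_eq[of f] by simp
qed

lemma linking_word_pow_eq:
  assumes "braid_eq n (word_pow U m) (word_pow V l)" and "m * l > 0"
  shows "linking id (concat (replicate (nat \<bar>m\<bar>) U)) x y
       = linking id (concat (replicate (nat \<bar>l\<bar>) V)) x y"
proof (cases "m > 0")
  case True
  with assms(2) have "l > 0" by (simp add: zero_less_mult_iff)
  with True assms(1) show ?thesis
    using braid_eq_strands_linking by (simp add: word_pow_def)
next
  case False
  with assms(2) have "m < 0" "l < 0" by (auto simp: zero_less_mult_iff)
  with assms(1) show ?thesis
    by (intro linking_eq_if_word_inv_equiv) (simp add: word_pow_def word_inv_replicate)
qed

lemma exp_sum_append: "exp_sum (u @ v) = exp_sum u + exp_sum v"
  by (simp add: exp_sum_def)

lemma exp_sum_replicate: "exp_sum (concat (replicate j w)) = int j * exp_sum w"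
  by (induction j) (auto simp: exp_sum_def algebra_simps)

lemma exp_sum_word_inv: "exp_sum (word_inv w) = - exp_sum w"
  by (induction w) (auto simp: exp_sum_def word_inv_def)

lemma exp_sum_word_pow: "exp_sum (word_pow w m) = m * exp_sum w"
  by (simp add: word_pow_def exp_sum_replicate exp_sum_word_inv)

definition reversal5 :: "nat \<Rightarrow> nat" where
  "reversal5 = id(1 := 5, 2 := 4, 4 := 2, 5 := 1)"

lemma strands_Delta5: "strands p Delta5 = p \<circ> reversal5"
proof -
  have "strands id Delta5 = reversal5"
    by (simp add: Delta5_def reversal5_def swap_at_def fun_eq_iff)
  then show ?thesis by (simp add: strands_eq_comp[of p])
qed

lemma linking_Delta5:
  assumes "p = id \<or> p = reversal5" and "x \<in> {1..5}" "y \<in> {1..5}" "x \<noteq> y"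
  shows "linking p Delta5 x y = 1"
proof -
  have "x \<in> {1,2,3,4,5}" "y \<in> {1,2,3,4,5}" using assms(2,3) by auto
  then show ?thesis
    using assms(1,4) unfolding insert_iff empty_iff
    by (elim disjE) (simp_all add: Delta5_def reversal5_def swap_at_def crossing_def pair_weight_def)
qed

lemma linking_Delta5_pow:
  assumes "x \<in> {1..5}" "y \<in> {1..5}" "x \<noteq> y"
  shows "linking id (concat (replicate L Delta5)) x y = int L"
proof -
  have "strands id (concat (replicate L Delta5)) = (if even L then id else reversal5)
     \<and> linking id (concat (replicate L Delta5)) x y = int L"
  proof (induction L)
    case (Suc L)
    have "reversal5 (reversal5 a) = a" for a by (simp add: reversal5_def)
    with Suc assms show ?case
      by (auto simp: replicate_append_same[symmetric] strands_append linking_append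
          strands_Delta5 linking_Delta5)
  qed simp
  then show ?thesis ..
qed

text \<open>\<open>\<beta>'\<^sub>k = A\<^sup>k\<^sup>-\<^sup>1 Y C\<^sup>k\<^sup>-\<^sup>1 Z\<close> with \<open>A = (\<sigma>\<^sub>1\<sigma>\<^sub>3)\<^sup>2\<close>, \<open>Y = (\<sigma>\<^sub>3\<sigma>\<^sub>4\<Delta>\<^sub>3)(\<Delta>\<^sub>3\<sigma>\<^sub>4)\<close>,
  \<open>C = (\<delta>\<^sub>3\<sigma>\<^sub>4)(\<sigma>\<^sub>1\<sigma>\<^sub>2\<sigma>\<^sub>4)\<close> and \<open>Z = \<delta>\<^sub>3\<sigma>\<^sub>4\<sigma>\<^sub>3\<sigma>\<^sub>4\<close>.\<close>

definition A_word :: "int list" where "A_word = [1,3,1,3]"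
definition Y_word :: "int list" where "Y_word = [3,4,2,1,2,2,1,2,4]"
definition C_word :: "int list" where "C_word = [2,1,4,1,2,4]"
definition Z_word :: "int list" where "Z_word = [2,1,4,3,4]"

definition beta_word :: "nat \<Rightarrow> int list" where
  "beta_word j = concat (replicate j A_word) @ Y_word @ concat (replicate j C_word) @ Z_word"

lemma beta'_eq_beta_word:
  assumes "k \<ge> 1"
  shows "beta' k = beta_word (k - 1)"
proof -
  have exps: "nat (2 * int k - 2) = (k - 1) * 2" "nat (int k - 1) = k - 1" using assms by auto
  show ?thesis
    unfolding beta'_def word_pow_def beta_word_def exps concat_replicate_mult
    using assms by (simp add: numeral_eq_Suc A_word_def Y_word_def C_word_def Z_word_def
        Delta3_def delta3_def tdelta3_def)
qed

lemma exp_sum_beta_word: "exp_sum (beta_word j) = 10 * int j + 14"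
  by (simp add: beta_word_def exp_sum_append exp_sum_replicate)
    (simp add: exp_sum_def A_word_def Y_word_def C_word_def Z_word_def)

definition beta_perm :: "nat \<Rightarrow> nat" where
  "beta_perm = id(1 := 4, 2 := 1, 3 := 5, 4 := 3, 5 := 2)"

lemma pure_A_word: "pure_word A_word"
  by (simp add: pure_word_def A_word_def swap_at_def fun_eq_iff)

lemma pure_C_word: "pure_word C_word"
  by (simp add: pure_word_def C_word_def swap_at_def fun_eq_iff)

lemma strands_beta_word: "strands p (beta_word j) = p \<circ> beta_perm"
proof -
  have "strands id (Y_word @ Z_word) = beta_perm"
    by (simp add: Y_word_def Z_word_def beta_perm_def swap_at_def fun_eq_iff)
  then show ?thesis
    by (simp add: beta_word_def strands_append strands_replicate_pure pure_A_word pure_C_word)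
      (metis strands_append strands_eq_comp)
qed

lemma pure_beta_word_pow5: "pure_word (concat (replicate 5 (beta_word j)))"
  by (simp add: pure_word_def numeral_eq_Suc strands_append strands_beta_word fun_eq_iff beta_perm_def)

lemma linking_beta_word:
  "linking p (beta_word j) x y = int j * (linking p A_word x y + linking (strands p Y_word) C_word x y)
     + linking p Y_word x y + linking (strands p Y_word) Z_word x y"
  by (simp add: beta_word_def strands_append linking_append strands_replicate_pure
      linking_replicate_pure pure_A_word pure_C_word algebra_simps)

lemma linking_beta_word_pow5_12: "linking id (concat (replicate 5 (beta_word j))) 1 2 = 8 * int j + 10"
  by (simp add: numeral_eq_Suc linking_append strands_append strands_beta_word linking_beta_word
      A_word_def Y_word_def C_word_def Z_word_def beta_perm_def swap_at_def crossing_def pair_weight_def)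

lemma linking_beta_word_pow5_13: "linking id (concat (replicate 5 (beta_word j))) 1 3 = 2 * int j + 4"
  by (simp add: numeral_eq_Suc linking_append strands_append strands_beta_word linking_beta_word
      A_word_def Y_word_def C_word_def Z_word_def beta_perm_def swap_at_def crossing_def pair_weight_def)

lemma beta_word_pow_not_Delta5_pow:
  assumes linking_eq: "\<And>x y. linking id (concat (replicate M (beta_word j))) x y
                            = linking id (concat (replicate L Delta5)) x y"
    and exp_sum_eq: "int M * (10 * int j + 14) = 10 * int L"
  shows "M = 0"
proof -
  have "14 * int M = 10 * (int L - int M * int j)" using exp_sum_eq by (simp add: algebra_simps)
  then have "5 dvd M" by presburger
  then obtain q where q: "M = q * 5" by (auto elim: dvdE)
  have pow: "concat (replicate M (beta_word j)) = concat (replicate q (concat (replicate 5 (beta_word j))))"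
    unfolding q concat_replicate_mult ..
  have "int q * (8 * int j + 10) = int L"
    using linking_eq[of 1 2] linking_Delta5_pow[of 1 2 L]
    unfolding pow linking_replicate_pure[OF pure_beta_word_pow5] linking_beta_word_pow5_12 by simp
  moreover have "int q * (2 * int j + 4) = int L"
    using linking_eq[of 1 3] linking_Delta5_pow[of 1 3 L]
    unfolding pow linking_replicate_pure[OF pure_beta_word_pow5] linking_beta_word_pow5_13 by simp
  ultimately have "int q * (6 * int j + 6) = 0" by (simp add: algebra_simps)
  then show "M = 0" using q by simp
qed

lemma beta_word_Delta5_exponents:
  assumes equiv: "braid_eq n (word_pow (beta_word j) m) (word_pow Delta5 l)" and "m \<noteq> 0"
  shows "m * l > 0" and "\<bar>m\<bar> * (10 * int j + 14) = 10 * \<bar>l\<bar>"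
proof -
  have "exp_sum Delta5 = 10" by (simp add: Delta5_def exp_sum_def)
  then have exp_eq: "m * (10 * int j + 14) = l * 10"
    using braid_eq_exp_sum[OF equiv] exp_sum_beta_word[of j] by (simp add: exp_sum_word_pow)
  have coeff_pos: "10 * int j + 14 > 0" by simp
  have "m * m > 0" using \<open>m \<noteq> 0\<close> by (auto simp: zero_less_mult_iff)
  moreover have "10 * (m * l) = m * m * (10 * int j + 14)"
    using arg_cong[OF exp_eq, of "times m"] by (simp add: algebra_simps)
  ultimately have "10 * (m * l) > 0" using coeff_pos by (metis mult_pos_pos)
  then show "m * l > 0" by (simp add: mult.commute)
  show "\<bar>m\<bar> * (10 * int j + 14) = 10 * \<bar>l\<bar>"
    using arg_cong[OF exp_eq, of abs] coeff_pos by (simp add: abs_mult mult.commute)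
qed

theorem mainTheorem6:
  fixes k :: nat
  assumes "k \<ge> 2"
  shows "\<not> periodic5 (beta' k)"
proof
  assume "periodic5 (beta' k)"
  then obtain m l :: int where "m \<noteq> 0"
    and equiv: "braid_eq 5 (word_pow (beta_word (k - 1)) m) (word_pow Delta5 l)"
    unfolding periodic5_def using assms beta'_eq_beta_word by fastforce
  note exponents = beta_word_Delta5_exponents[OF equiv \<open>m \<noteq> 0\<close>]
  have "nat \<bar>m\<bar> = 0"
    using linking_word_pow_eq[OF equiv exponents(1)] exponents(2)
    by (intro beta_word_pow_not_Delta5_pow[where L = "nat \<bar>l\<bar>"]) auto
  with \<open>m \<noteq> 0\<close> show False by simp
qed

end
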